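(* In the Bayesian offline learning setting for $n$-round dynamic inference described in the context, let $\psi_m^n$ be any offline-learned estimation strategy. Then $$\mathbb P\big[(\pi_m,X_{i+1})\in A\times B\mid\pi_m,X^i,\hat Y^i\big]=\mathbf 1\{\pi_m\in A\}\,\mathbb P\big[X_{i+1}\in B\mid X_i,\hat Y_i\big]$$ for any Borel sets $A\subset\Delta$ and $B\subset\mathsf X$, any realization of $(\pi_m,X^i,\hat Y^i)$, and any $i=1,\ldots,n-1$. In other words, $(\pi_m,X_i)_{i=1}^n$ is a controlled Markov chain with control sequence $\hat Y^n$.
   Context: Setting (Bayesian offline learning for $n$-round dynamic inference). $\mathsf X,\mathsf Y,\hat{\mathsf Y},\mathsf W$ are measurable spaces and $\Delta$ is the space of probability distributions on $\mathsf W$. The following are given: a distribution $P_{X_1}$ on $\mathsf X$; probability transition kernels $K_i(\cdot\mid x,\hat y)$ from $\mathsf X\times\hat{\mathsf Y}$ to $\mathsf X$ for $i=2,\ldots,n$; a parametrized family of kernels $\{P_{Y|X,w}:w\in\mathsf W\}$ from $\mathsf X$ to $\mathsf Y$; a prior $P_W$ on $\mathsf W$; a conditional distribution $P_{Z^m|W}$ of an $m$-sample training dataset $Z^m$ with values in $(\mathsf X\times\hat{\mathsf Y})^m$; and a loss $\ell$. An offline-learned estimation strategy is a tuple $\psi_m^n=(\psi_{m,1},\ldots,\psi_{m,n})$ of maps $\psi_{m,i}:(\mathsf X\times\hat{\mathsf Y})^m\times\mathsf X^i\times\hat{\mathsf Y}^{i-1}\to\hat{\mathsf Y}$. It determines the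 joint law of $(W,Z^m,X^n,Y^n,\hat Y^n)$ as follows. $W\sim P_W$, and $Z^m\mid W\sim P_{Z^m|W}$. $X_1\sim P_{X_1}$ is independent of $(W,Z^m)$. For each $i$: given all previously generated variables, $Y_i\sim P_{Y|X,W}(\cdot\mid X_i,W)$; $\hat Y_i=\psi_{m,i}(Z^m,X^i,\hat Y^{i-1})$; and, given all variables generated up to round $i$, $X_{i+1}\sim K_{i+1}(\cdot\mid X_i,\hat Y_i)$. Let $\pi_m(\cdot)=\mathbb P[W\in\cdot\mid Z^m]$. *)

theory Defs
  imports "HOL-Probability.Probability"
begin

definition gen_alg :: "'a measure \<Rightarrow> ('a \<Rightarrow> 'b) \<Rightarrow> 'b measure \<Rightarrow> 'a measure" where
  "gen_alg M f N = vimage_algebra (space M) f N"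

definition cond_prob :: "'a measure \<Rightarrow> 'a measure \<Rightarrow> 'a set \<Rightarrow> 'a \<Rightarrow> real" where
  "cond_prob M F E = real_cond_exp M F (indicator E)"

end

theory Submission
  imports Defs
begin

(* Given the full history (W, Z^m, X^i, Y^i, Yh^i), the next state X_{i+1} has the law
   K_{i+1}(. | X_i, Yh_i), which depends on (X_i, Yh_i) alone. Since pi_m is a function of Z^m,
   sigma(X_i, Yh_i) is contained in sigma(pi_m, X^i, Yh^i), which is contained in the sigma-algebra of
   the full history. The tower property therefore yields the same conditional probability of
   {X_{i+1} in B} given either of the two smaller sigma-algebras, and the event {pi_m in A},
   being measurable for the middle one, factors out as an indicator. *)

lemma subalgebra_gen_alg:
  assumes "h \<in> M \<rightarrow>\<^sub>M N"
  shows "subalgebra M (gen_alg M h N)"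
  unfolding subalgebra_def gen_alg_def using sets_image_in_sets[OF refl assms] by simp

lemma measurable_factor:
  assumes "h \<in> M \<rightarrow>\<^sub>M N" "\<phi> \<in> N \<rightarrow>\<^sub>M R" "\<And>\<omega>. \<omega> \<in> space M \<Longrightarrow> g \<omega> = \<phi> (h \<omega>)"
  shows "g \<in> M \<rightarrow>\<^sub>M R"
  using measurable_compose[OF assms(1,2)] by (rule measurable_cong[THEN iffD1, rotated]) (simp add: assms(3))

lemma measurable_gen_alg_factor:
  assumes "h \<in> M \<rightarrow>\<^sub>M N" "\<phi> \<in> N \<rightarrow>\<^sub>M R" "\<And>\<omega>. \<omega> \<in> space M \<Longrightarrow> g \<omega> = \<phi> (h \<omega>)"
  shows "g \<in> gen_alg M h N \<rightarrow>\<^sub>M R"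
proof (rule measurable_factor[OF _ assms(2)])
  show "h \<in> gen_alg M h N \<rightarrow>\<^sub>M N"
    unfolding gen_alg_def using assms(1) by (intro measurable_vimage_algebra1) (auto simp: measurable_def)
qed (simp add: assms(3) gen_alg_def)

lemma subalgebra_gen_alg_factor:
  assumes "h \<in> M \<rightarrow>\<^sub>M N" "\<phi> \<in> N \<rightarrow>\<^sub>M R" "\<And>\<omega>. \<omega> \<in> space M \<Longrightarrow> g \<omega> = \<phi> (h \<omega>)"
  shows "subalgebra (gen_alg M h N) (gen_alg M g R)"
  using sets_image_in_sets[OF _ measurable_gen_alg_factor[OF assms]]
  unfolding subalgebra_def by (simp add: gen_alg_def)

lemma real_cond_exp_eq_if_coarser:
  assumes "sigma_finite_subalgebra M G" "subalgebra M H" "subalgebra H G"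
    and f: "integrable M f"
    and fk: "AE x in M. real_cond_exp M H f x = k x"
    and k: "k \<in> borel_measurable G"
  shows "AE x in M. real_cond_exp M G f x = k x"
proof -
  interpret G: sigma_finite_subalgebra M G by fact
  interpret H: sigma_finite_subalgebra M H
    by (rule G.nested_subalg_is_sigma_finite) fact+
  have kM: "k \<in> borel_measurable M"
    using k by (rule measurable_from_subalg[OF G.subalg])
  have "integrable M k"
    using integrable_cong_AE[OF _ kM fk] H.real_cond_exp_int(1)[OF f] by simp
  then have "AE x in M. real_cond_exp M G k x = k x"
    using k by (rule G.real_cond_exp_F_meas)
  moreover have "AE x in M. real_cond_exp M G (real_cond_exp M H f) x = real_cond_exp M G k x"
    using fk kM by (intro G.real_cond_exp_cong) auto
  moreover have "AE x in M. real_cond_exp M G (real_cond_exp M H f) x = real_cond_exp M G f x"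
    using assms(2,3) f by (rule G.real_cond_exp_nested_subalg)
  ultimately show ?thesis by eventually_elim simp
qed

lemma cond_prob_Int_eq_indicator_mult_cond_prob:
  assumes M: "finite_measure M"
    and "subalgebra M H" "subalgebra H G" "subalgebra G G'"
    and E: "E \<in> sets M" and D: "D \<in> sets G"
    and Ek: "AE x in M. cond_prob M H E x = k x" and k: "k \<in> borel_measurable G'"
  shows "AE x in M. cond_prob M G (D \<inter> E) x = indicator D x * cond_prob M G' E x"
proof -
  interpret finite_measure M by fact
  have "subalgebra M G" "subalgebra M G'" "subalgebra H G'"
    using assms(2-4) unfolding subalgebra_def by auto
  then interpret G: finite_measure_subalgebra M G + G': finite_measure_subalgebra M G'
    by unfold_locales
  have iE: "integrable M (indicator E :: _ \<Rightarrow> real)"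
    using E by (intro integrable_real_indicator) (auto simp: less_top[symmetric])
  have kG: "k \<in> borel_measurable G"
    using k by (rule measurable_from_subalg[OF \<open>subalgebra G G'\<close>])
  have "AE x in M. cond_prob M G' E x = k x"
    using G'.sigma_finite_subalgebra_axioms assms(2) \<open>subalgebra H G'\<close> iE Ek[unfolded cond_prob_def] k
    unfolding cond_prob_def by (rule real_cond_exp_eq_if_coarser)
  moreover have "AE x in M. cond_prob M G E x = k x"
    using G.sigma_finite_subalgebra_axioms assms(2,3) iE Ek[unfolded cond_prob_def] kG
    unfolding cond_prob_def by (rule real_cond_exp_eq_if_coarser)
  moreover have "AE x in M. cond_prob M G (D \<inter> E) x = indicator D x * cond_prob M G E x"
  proof -
    have prod: "(\<lambda>x. indicator D x * indicator E x :: real) = indicator (D \<inter> E)"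
      by (auto simp: indicator_def)
    have "D \<inter> E \<in> sets M"
      using D E G.subalg unfolding subalgebra_def by auto
    then have "integrable M (\<lambda>x. indicator D x * indicator E x :: real)"
      unfolding prod by (intro integrable_real_indicator) (auto simp: less_top[symmetric])
    then show ?thesis
      unfolding cond_prob_def prod[symmetric] using D E by (intro G.real_cond_exp_mult) auto
  qed
  ultimately show ?thesis by eventually_elim simp
qed

lemma cond_prob_gen_alg_Int_eq:
  assumes M: "finite_measure M"
    and h: "h \<in> M \<rightarrow>\<^sub>M N"
    and \<phi>: "\<phi> \<in> N \<rightarrow>\<^sub>M N'" "\<And>\<omega>. \<omega> \<in> space M \<Longrightarrow> h' \<omega> = \<phi> (h \<omega>)"
    and \<psi>: "\<psi> \<in> N' \<rightarrow>\<^sub>M N''" "\<And>\<omega>. \<omega> \<in> space M \<Longrightarrow> h'' \<omega> = \<psi> (h' \<omega>)"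
    and E: "E \<in> sets M" and D: "D \<in> sets (gen_alg M h' N')"
    and E_\<kappa>: "AE \<omega> in M. cond_prob M (gen_alg M h N) E \<omega> = \<kappa> (h'' \<omega>)"
    and \<kappa>: "\<kappa> \<in> borel_measurable N''"
  shows "AE \<omega> in M. cond_prob M (gen_alg M h' N') (D \<inter> E) \<omega>
    = indicator D \<omega> * cond_prob M (gen_alg M h'' N'') E \<omega>"
proof -
  have h': "h' \<in> M \<rightarrow>\<^sub>M N'"
    by (rule measurable_factor[OF h \<phi>])
  have h'': "h'' \<in> M \<rightarrow>\<^sub>M N''"
    by (rule measurable_factor[OF h' \<psi>])
  show ?thesis
  proof (rule cond_prob_Int_eq_indicator_mult_cond_prob[OF M subalgebra_gen_alg[OF h]
        subalgebra_gen_alg_factor[OF h \<phi>] subalgebra_gen_alg_factor[OF h' \<psi>] E D E_\<kappa>])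
    show "(\<lambda>\<omega>. \<kappa> (h'' \<omega>)) \<in> borel_measurable (gen_alg M h'' N'')"
      by (rule measurable_gen_alg_factor[OF h'' \<kappa>]) simp
  qed
qed

theorem lemma2:
  fixes M :: "'a measure"
    and Xs :: "'x measure" and Ys :: "'y measure" and Yhs :: "'yh measure" and Ws :: "'w measure"
    and n m :: nat
    and PX1 :: "'x measure"
    and K :: "nat \<Rightarrow> 'x \<times> 'yh \<Rightarrow> 'x measure"
    and PY :: "'w \<Rightarrow> 'x \<Rightarrow> 'y measure"
    and PW :: "'w measure"
    and PZW :: "'w \<Rightarrow> (nat \<Rightarrow> 'x \<times> 'yh) measure"
    and \<psi> :: "nat \<Rightarrow> (nat \<Rightarrow> 'x \<times> 'yh) \<Rightarrow> (nat \<Rightarrow> 'x) \<Rightarrow> (nat \<Rightarrow> 'yh) \<Rightarrow> 'yh"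
    and W :: "'a \<Rightarrow> 'w" and Z :: "'a \<Rightarrow> (nat \<Rightarrow> 'x \<times> 'yh)"
    and X :: "nat \<Rightarrow> 'a \<Rightarrow> 'x" and Y :: "nat \<Rightarrow> 'a \<Rightarrow> 'y" and Yh :: "nat \<Rightarrow> 'a \<Rightarrow> 'yh"
    and \<pi> :: "'a \<Rightarrow> 'w measure"
  defines "Zsp \<equiv> PiM {1..m} (\<lambda>_. Xs \<Otimes>\<^sub>M Yhs)"
  assumes M: "prob_space M"
    \<comment> \<open>the given model primitives\<close>
    and PX1: "prob_space PX1" "sets PX1 = sets Xs"
    and K: "\<And>i. i \<in> {2..n} \<Longrightarrow> K i \<in> measurable (Xs \<Otimes>\<^sub>M Yhs) (prob_algebra Xs)"
    and PY: "(\<lambda>(x, w). PY w x) \<in> measurable (Xs \<Otimes>\<^sub>M Ws) (prob_algebra Ys)"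
    and PW: "prob_space PW" "sets PW = sets Ws"
    and PZW: "PZW \<in> measurable Ws (prob_algebra Zsp)"
    \<comment> \<open>the offline-learned estimation strategy (measurable maps)\<close>
    and psi: "\<And>i. i \<in> {1..n} \<Longrightarrow>
       (\<lambda>(z, xs, ys). \<psi> i z xs ys) \<in>
         measurable (Zsp \<Otimes>\<^sub>M PiM {1..i} (\<lambda>_. Xs) \<Otimes>\<^sub>M PiM {1..<i} (\<lambda>_. Yhs)) Yhs"
    \<comment> \<open>the random variables\<close>
    and W: "W \<in> measurable M Ws" and Z: "Z \<in> measurable M Zsp"
    and X: "\<And>i. i \<in> {1..n} \<Longrightarrow> X i \<in> measurable M Xs"
    and Y: "\<And>i. i \<in> {1..n} \<Longrightarrow> Y i \<in> measurable M Ys"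
    and Yh: "\<And>i. i \<in> {1..n} \<Longrightarrow> Yh i \<in> measurable M Yhs"
    \<comment> \<open>W ~ P_W and Z^m | W ~ P_{Z^m|W}\<close>
    and WZ: "distr M (Ws \<Otimes>\<^sub>M Zsp) (\<lambda>\<omega>. (W \<omega>, Z \<omega>)) =
             PW \<bind> (\<lambda>w. distr (PZW w) (Ws \<Otimes>\<^sub>M Zsp) (\<lambda>z. (w, z)))"
    \<comment> \<open>X_1 ~ P_X1, independent of (W, Z^m)\<close>
    and X1: "distr M Xs (X 1) = PX1"
    and X1indep: "distr M (Xs \<Otimes>\<^sub>M (Ws \<Otimes>\<^sub>M Zsp)) (\<lambda>\<omega>. (X 1 \<omega>, W \<omega>, Z \<omega>)) =
             distr M Xs (X 1) \<Otimes>\<^sub>M distr M (Ws \<Otimes>\<^sub>M Zsp) (\<lambda>\<omega>. (W \<omega>, Z \<omega>))"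
    \<comment> \<open>Y_i | (W, Z^m, X^i, Y^{i-1}, Yh^{i-1}) ~ P_{Y|X,W}(. | X_i, W)\<close>
    and Ylaw: "\<And>i C. i \<in> {1..n} \<Longrightarrow> C \<in> sets Ys \<Longrightarrow>
       AE \<omega> in M. cond_prob M
          (gen_alg M (\<lambda>\<omega>. (W \<omega>, Z \<omega>, restrict (\<lambda>j. X j \<omega>) {1..i},
                             restrict (\<lambda>j. Y j \<omega>) {1..<i}, restrict (\<lambda>j. Yh j \<omega>) {1..<i}))
             (Ws \<Otimes>\<^sub>M Zsp \<Otimes>\<^sub>M PiM {1..i} (\<lambda>_. Xs) \<Otimes>\<^sub>M PiM {1..<i} (\<lambda>_. Ys)
                \<Otimes>\<^sub>M PiM {1..<i} (\<lambda>_. Yhs)))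
          {\<omega> \<in> space M. Y i \<omega> \<in> C} \<omega>
        = measure (PY (W \<omega>) (X i \<omega>)) C"
    \<comment> \<open>Yh_i = psi_i(Z^m, X^i, Yh^{i-1})\<close>
    and Yhdef: "\<And>i \<omega>. i \<in> {1..n} \<Longrightarrow> \<omega> \<in> space M \<Longrightarrow>
       Yh i \<omega> = \<psi> i (Z \<omega>) (restrict (\<lambda>j. X j \<omega>) {1..i}) (restrict (\<lambda>j. Yh j \<omega>) {1..<i})"
    \<comment> \<open>X_{i+1} | (W, Z^m, X^i, Y^i, Yh^i) ~ K_{i+1}(. | X_i, Yh_i)\<close>
    and Xlaw: "\<And>i B. i \<in> {1..<n} \<Longrightarrow> B \<in> sets Xs \<Longrightarrow>
       AE \<omega> in M. cond_prob M
          (gen_alg M (\<lambda>\<omega>. (W \<omega>, Z \<omega>, restrict (\<lambda>j. X j \<omega>) {1..i},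
                             restrict (\<lambda>j. Y j \<omega>) {1..i}, restrict (\<lambda>j. Yh j \<omega>) {1..i}))
             (Ws \<Otimes>\<^sub>M Zsp \<Otimes>\<^sub>M PiM {1..i} (\<lambda>_. Xs) \<Otimes>\<^sub>M PiM {1..i} (\<lambda>_. Ys)
                \<Otimes>\<^sub>M PiM {1..i} (\<lambda>_. Yhs)))
          {\<omega> \<in> space M. X (Suc i) \<omega> \<in> B} \<omega>
        = measure (K (Suc i) (X i \<omega>, Yh i \<omega>)) B"
    \<comment> \<open>pi_m = P[W \<in> . | Z^m]: a sigma(Z^m)-measurable version of the posterior\<close>
    and pi_fun: "\<exists>g \<in> measurable Zsp (prob_algebra Ws). \<forall>\<omega> \<in> space M. \<pi> \<omega> = g (Z \<omega>)"
    and pi_post: "\<And>C. C \<in> sets Ws \<Longrightarrow>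
       AE \<omega> in M. measure (\<pi> \<omega>) C = cond_prob M (gen_alg M Z Zsp) {\<omega> \<in> space M. W \<omega> \<in> C} \<omega>"
  shows "\<forall>i \<in> {1..<n}. \<forall>A \<in> sets (prob_algebra Ws). \<forall>B \<in> sets Xs.
       AE \<omega> in M.
         cond_prob M
           (gen_alg M (\<lambda>\<omega>. (\<pi> \<omega>, restrict (\<lambda>j. X j \<omega>) {1..i}, restrict (\<lambda>j. Yh j \<omega>) {1..i}))
              (prob_algebra Ws \<Otimes>\<^sub>M PiM {1..i} (\<lambda>_. Xs) \<Otimes>\<^sub>M PiM {1..i} (\<lambda>_. Yhs)))
           {\<omega> \<in> space M. \<pi> \<omega> \<in> A \<and> X (Suc i) \<omega> \<in> B} \<omega>
       = indicator A (\<pi> \<omega>) *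
         cond_prob M (gen_alg M (\<lambda>\<omega>. (X i \<omega>, Yh i \<omega>)) (Xs \<Otimes>\<^sub>M Yhs))
           {\<omega> \<in> space M. X (Suc i) \<omega> \<in> B} \<omega>"
proof (intro ballI)
  fix i A B assume i: "i \<in> {1..<n}" and A: "A \<in> sets (prob_algebra Ws)" and B: "B \<in> sets Xs"
  interpret prob_space M by (rule M)
  obtain g where g: "g \<in> Zsp \<rightarrow>\<^sub>M prob_algebra Ws" and \<pi>_g: "\<And>\<omega>. \<omega> \<in> space M \<Longrightarrow> \<pi> \<omega> = g (Z \<omega>)"
    using pi_fun by blast
  have [measurable]: "\<pi> \<in> M \<rightarrow>\<^sub>M prob_algebra Ws"
    by (rule measurable_factor[OF Z g]) (rule \<pi>_g)
  have [measurable]: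
    "(\<lambda>x. x i) \<in> PiM {1..i} (\<lambda>_. Xs) \<rightarrow>\<^sub>M Xs" "(\<lambda>x. x i) \<in> PiM {1..i} (\<lambda>_. Yhs) \<rightarrow>\<^sub>M Yhs"
    "(\<lambda>\<omega>. restrict (\<lambda>j. X j \<omega>) {1..i}) \<in> M \<rightarrow>\<^sub>M PiM {1..i} (\<lambda>_. Xs)"
    "(\<lambda>\<omega>. restrict (\<lambda>j. Y j \<omega>) {1..i}) \<in> M \<rightarrow>\<^sub>M PiM {1..i} (\<lambda>_. Ys)"
    "(\<lambda>\<omega>. restrict (\<lambda>j. Yh j \<omega>) {1..i}) \<in> M \<rightarrow>\<^sub>M PiM {1..i} (\<lambda>_. Yhs)"
    using i X Y Yh by (auto intro!: measurable_restrict)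
  note [measurable] = W Z g
  have K_B: "(\<lambda>p. measure (K (Suc i) p) B) \<in> borel_measurable (Xs \<Otimes>\<^sub>M Yhs)"
    using measurable_compose[OF K measurable_measure_prob_algebra[OF B]] i by simp
  let ?hist = "\<lambda>\<omega>. (W \<omega>, Z \<omega>, restrict (\<lambda>j. X j \<omega>) {1..i}, restrict (\<lambda>j. Y j \<omega>) {1..i},
    restrict (\<lambda>j. Yh j \<omega>) {1..i})"
  let ?Hsp = "Ws \<Otimes>\<^sub>M Zsp \<Otimes>\<^sub>M PiM {1..i} (\<lambda>_. Xs) \<Otimes>\<^sub>M PiM {1..i} (\<lambda>_. Ys) \<Otimes>\<^sub>M PiM {1..i} (\<lambda>_. Yhs)"
  let ?obs = "\<lambda>\<omega>. (\<pi> \<omega>, restrict (\<lambda>j. X j \<omega>) {1..i}, restrict (\<lambda>j. Yh j \<omega>) {1..i})"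
  let ?Gsp = "prob_algebra Ws \<Otimes>\<^sub>M PiM {1..i} (\<lambda>_. Xs) \<Otimes>\<^sub>M PiM {1..i} (\<lambda>_. Yhs)"
  have hist: "?hist \<in> M \<rightarrow>\<^sub>M ?Hsp" and obs: "?obs \<in> M \<rightarrow>\<^sub>M ?Gsp"
    by measurable
  have D: "{\<omega> \<in> space M. \<pi> \<omega> \<in> A} \<in> sets (gen_alg M ?obs ?Gsp)"
    using measurable_sets[OF measurable_gen_alg_factor[OF obs measurable_fst] A]
    by (simp add: gen_alg_def vimage_def Int_def conj_commute)
  have E: "{\<omega> \<in> space M. X (Suc i) \<omega> \<in> B} \<in> sets M"
    using X[of "Suc i"] i B by (auto intro: measurable_sets_Collect)
  have "AE \<omega> in M. cond_prob M (gen_alg M ?obs ?Gsp)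
      ({\<omega> \<in> space M. \<pi> \<omega> \<in> A} \<inter> {\<omega> \<in> space M. X (Suc i) \<omega> \<in> B}) \<omega>
    = indicator {\<omega> \<in> space M. \<pi> \<omega> \<in> A} \<omega>
      * cond_prob M (gen_alg M (\<lambda>\<omega>. (X i \<omega>, Yh i \<omega>)) (Xs \<Otimes>\<^sub>M Yhs)) {\<omega> \<in> space M. X (Suc i) \<omega> \<in> B} \<omega>"
  proof (rule cond_prob_gen_alg_Int_eq[OF finite_measure_axioms hist _ _ _ _ E D Xlaw[OF i B] K_B])
    show "(\<lambda>(w, z, xs, ys, yhs). (g z, xs, yhs)) \<in> ?Hsp \<rightarrow>\<^sub>M ?Gsp"
      by measurable
    show "(\<lambda>(p, xs, yhs). (xs i, yhs i)) \<in> ?Gsp \<rightarrow>\<^sub>M Xs \<Otimes>\<^sub>M Yhs"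
      by measurable
  qed (use i in \<open>simp_all add: \<pi>_g\<close>)
  moreover have "{\<omega> \<in> space M. \<pi> \<omega> \<in> A} \<inter> {\<omega> \<in> space M. X (Suc i) \<omega> \<in> B}
    = {\<omega> \<in> space M. \<pi> \<omega> \<in> A \<and> X (Suc i) \<omega> \<in> B}"
    by blast
  ultimately show "AE \<omega> in M. cond_prob M (gen_alg M ?obs ?Gsp)
      {\<omega> \<in> space M. \<pi> \<omega> \<in> A \<and> X (Suc i) \<omega> \<in> B} \<omega>
    = indicator A (\<pi> \<omega>)
      * cond_prob M (gen_alg M (\<lambda>\<omega>. (X i \<omega>, Yh i \<omega>)) (Xs \<Otimes>\<^sub>M Yhs)) {\<omega> \<in> space M. X (Suc i) \<omega> \<in> B} \<omega>"
    by (elim AE_mp) (simp add: indicator_def AE_I2)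
qed

end
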